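(* Let $X$ be a finite connected poset and $F$ a field with $\mathrm{char}(F)\ne 2$. Then every bijective $F$-linear map $\varphi:I(X,F)\to I(X,F)$ satisfying $\varphi(E(I(X,F)))\subseteq E(I(X,F))$ is either an automorphism or an anti-automorphism of $I(X,F)$.
   Context: $I(X,F)$ is the incidence algebra of the locally finite poset $X$ over $F$ (functions $f:X\times X\to F$ vanishing unless $x\le y$, with product $(fg)(x,y)=\sum_{x\le z\le y}f(x,z)g(z,y)$). A poset is connected if any two elements are joined by a finite sequence of elements in which consecutive elements are comparable. $E(A)$ denotes the set of idempotents of a ring $A$. *)

theory Defs
  imports Main
begin

text \<open>A poset is given as a subset X of a type with a partial order; the
order of X is the restriction of the ambient order.\<close>

definition connected_poset :: "'a::order set \<Rightarrow> bool" where
  "connected_poset X \<longleftrightarrow>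
     (\<forall>x\<in>X. \<forall>y\<in>X. (\<lambda>a b. a \<in> X \<and> b \<in> X \<and> (a \<le> b \<or> b \<le> a))\<^sup>*\<^sup>* x y)"

definition inc_alg :: "'a::order set \<Rightarrow> ('a \<Rightarrow> 'a \<Rightarrow> 'b::field) set" where
  "inc_alg X = {f. \<forall>x y. f x y \<noteq> 0 \<longrightarrow> x \<in> X \<and> y \<in> X \<and> x \<le> y}"

definition inc_mult :: "'a::order set \<Rightarrow> ('a \<Rightarrow> 'a \<Rightarrow> 'b::field) \<Rightarrow> ('a \<Rightarrow> 'a \<Rightarrow> 'b) \<Rightarrow> ('a \<Rightarrow> 'a \<Rightarrow> 'b)" where
  "inc_mult X f g = (\<lambda>x y. \<Sum>z\<in>{z\<in>X. x \<le> z \<and> z \<le> y}. f x z * g z y)"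

definition inc_idempotents :: "'a::order set \<Rightarrow> ('a \<Rightarrow> 'a \<Rightarrow> 'b::field) set" where
  "inc_idempotents X = {e \<in> inc_alg X. inc_mult X e e = e}"

definition inc_linear :: "'a::order set \<Rightarrow> (('a \<Rightarrow> 'a \<Rightarrow> 'b::field) \<Rightarrow> ('a \<Rightarrow> 'a \<Rightarrow> 'b)) \<Rightarrow> bool" where
  "inc_linear X \<phi> \<longleftrightarrow>
     (\<forall>f\<in>inc_alg X. \<forall>g\<in>inc_alg X. \<phi> (\<lambda>x y. f x y + g x y) = (\<lambda>x y. \<phi> f x y + \<phi> g x y)) \<and>
     (\<forall>c. \<forall>f\<in>inc_alg X. \<phi> (\<lambda>x y. c * f x y) = (\<lambda>x y. c * \<phi> f x y))"

definition inc_automorphism :: "'a::order set \<Rightarrow> (('a \<Rightarrow> 'a \<Rightarrow> 'b::field) \<Rightarrow> ('a \<Rightarrow> 'a \<Rightarrow> 'b)) \<Rightarrow> bool" where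
  "inc_automorphism X \<phi> \<longleftrightarrow> bij_betw \<phi> (inc_alg X) (inc_alg X) \<and> inc_linear X \<phi> \<and>
     (\<forall>f\<in>inc_alg X. \<forall>g\<in>inc_alg X. \<phi> (inc_mult X f g) = inc_mult X (\<phi> f) (\<phi> g))"

definition inc_anti_automorphism :: "'a::order set \<Rightarrow> (('a \<Rightarrow> 'a \<Rightarrow> 'b::field) \<Rightarrow> ('a \<Rightarrow> 'a \<Rightarrow> 'b)) \<Rightarrow> bool" where
  "inc_anti_automorphism X \<phi> \<longleftrightarrow> bij_betw \<phi> (inc_alg X) (inc_alg X) \<and> inc_linear X \<phi> \<and>
     (\<forall>f\<in>inc_alg X. \<forall>g\<in>inc_alg X. \<phi> (inc_mult X f g) = inc_mult X (\<phi> g) (\<phi> f))"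

end

(*
  Write E p q for the matrix units of I(X,F) and gamma p q = phi (E p q). Since 2 is invertible,
  the idempotents E p p, E p p + E q q, E p p +- E p q, ... force Jordan relations among the
  gamma's: the gamma p p are orthogonal idempotents summing to phi 1 = 1 (surjectivity), and for
  p < q the element gamma p q squares to 0 and splits into the Peirce components
  fwd p q = gamma p p * gamma p q * gamma q q and bwd p q = gamma q q * gamma p q * gamma p p.
  Each gamma p p has a single nonzero diagonal entry, at a point sigma p, and an entry-wise look at
  these corners shows that exactly one of fwd p q, bwd p q is nonzero, and that the choice agrees
  for any two comparable pairs sharing a point. On a connected poset the choice is therefore
  global: if all bwd vanish, the gamma's multiply like the matrix units and phi is an
  automorphism; if all fwd vanish, they multiply in the opposite order and phi is an
  anti-automorphism.
*)

theory Submission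
  imports Defs "HOL-Library.Function_Algebras"
begin

section \<open>Arithmetic in the incidence algebra\<close>

definition inc_scale :: "'b::field \<Rightarrow> ('a \<Rightarrow> 'a \<Rightarrow> 'b) \<Rightarrow> ('a \<Rightarrow> 'a \<Rightarrow> 'b)" where
  "inc_scale c f = (\<lambda>x y. c * f x y)"

definition inc_unit :: "'a \<Rightarrow> 'a \<Rightarrow> 'a \<Rightarrow> 'a \<Rightarrow> 'b::field" where
  "inc_unit p q = (\<lambda>x y. if x = p \<and> y = q then 1 else 0)"

definition inc_one :: "'a set \<Rightarrow> 'a \<Rightarrow> 'a \<Rightarrow> 'b::field" where
  "inc_one X = (\<lambda>x y. if x = y \<and> x \<in> X then 1 else 0)"

definition inc_pairs :: "'a::order set \<Rightarrow> ('a \<times> 'a) set" where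
  "inc_pairs X = {(p, q). p \<in> X \<and> q \<in> X \<and> p \<le> q}"

lemma sum_fun_apply2: "sum F I x y = (\<Sum>i\<in>I. F i x y)"
  by (induction I rule: infinite_finite_induct) auto

lemma inc_scale_scale: "inc_scale a (inc_scale b f) = inc_scale (a * b) f"
  by (simp add: inc_scale_def mult.assoc)

lemma inc_scale_add: "inc_scale c (f + g) = inc_scale c f + inc_scale c g"
  by (simp add: inc_scale_def fun_eq_iff distrib_left)

lemma inc_scale_sum: "inc_scale c (sum F I) = (\<Sum>i\<in>I. inc_scale c (F i))"
  by (simp add: inc_scale_def fun_eq_iff sum_fun_apply2 sum_distrib_left)

lemma inc_scale_minus_one: "inc_scale (- 1) f = - f"
  by (simp add: inc_scale_def fun_eq_iff)

lemma fun_double_eq_zero: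
  fixes f :: "'a \<Rightarrow> 'a \<Rightarrow> 'b::field"
  assumes "(2::'b) \<noteq> 0" and "f + f = 0"
  shows "f = 0"
proof (intro ext)
  fix x y
  have "f x y + f x y = 0"
    using fun_cong[OF fun_cong[OF assms(2), of x], of y] by simp
  then have "2 * f x y = 0" by (simp only: mult_2)
  then show "f x y = 0 x y" using assms(1) by simp
qed

locale incidence_algebra =
  fixes X :: "'a::order set"
begin

abbreviation mult :: "('a \<Rightarrow> 'a \<Rightarrow> 'b::field) \<Rightarrow> ('a \<Rightarrow> 'a \<Rightarrow> 'b) \<Rightarrow> ('a \<Rightarrow> 'a \<Rightarrow> 'b)"
    (infixl "\<star>" 70) where
  "f \<star> g \<equiv> inc_mult X f g"

lemma inc_mult_add_left: "(f + g) \<star> h = f \<star> h + g \<star> h"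
  by (simp add: inc_mult_def fun_eq_iff distrib_right sum.distrib)

lemma inc_mult_add_right: "h \<star> (f + g) = h \<star> f + h \<star> g"
  by (simp add: inc_mult_def fun_eq_iff distrib_left sum.distrib)

lemma inc_mult_minus_left: "(- f) \<star> h = - (f \<star> h)"
  by (simp add: inc_mult_def fun_eq_iff sum_negf)

lemma inc_mult_minus_right: "h \<star> (- f) = - (h \<star> f)"
  by (simp add: inc_mult_def fun_eq_iff sum_negf)

lemma inc_mult_diff_left: "(f - g) \<star> h = f \<star> h - g \<star> h"
  by (simp add: inc_mult_def fun_eq_iff left_diff_distrib sum_subtractf)

lemma inc_mult_diff_right: "h \<star> (f - g) = h \<star> f - h \<star> g"
  by (simp add: inc_mult_def fun_eq_iff right_diff_distrib sum_subtractf)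

lemma inc_mult_zero_left [simp]: "0 \<star> h = 0"
  by (simp add: inc_mult_def fun_eq_iff)

lemma inc_mult_zero_right [simp]: "h \<star> 0 = 0"
  by (simp add: inc_mult_def fun_eq_iff)

lemma inc_mult_scale_left: "inc_scale c f \<star> h = inc_scale c (f \<star> h)"
  by (simp add: inc_mult_def inc_scale_def fun_eq_iff sum_distrib_left mult.assoc)

lemma inc_mult_scale_right: "h \<star> inc_scale c f = inc_scale c (h \<star> f)"
  by (simp add: inc_mult_def inc_scale_def fun_eq_iff sum_distrib_left mult.left_commute)

lemma inc_mult_sum_left: "sum F I \<star> h = (\<Sum>i\<in>I. F i \<star> h)"
proof (induction I rule: infinite_finite_induct)
  case (insert i J)
  then show ?case by (simp only: sum.insert simp_thms inc_mult_add_left)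
qed (simp_all only: sum.infinite sum.empty simp_thms inc_mult_zero_left)

lemma inc_mult_sum_right: "h \<star> sum F I = (\<Sum>i\<in>I. h \<star> F i)"
proof (induction I rule: infinite_finite_induct)
  case (insert i J)
  then show ?case by (simp only: sum.insert simp_thms inc_mult_add_right)
qed (simp_all only: sum.infinite sum.empty simp_thms inc_mult_zero_right)

lemma inc_mult_diag: "x \<in> X \<Longrightarrow> (f \<star> g) x x = f x x * g x x"
proof -
  assume "x \<in> X"
  then have "{z \<in> X. x \<le> z \<and> z \<le> x} = {x}" by (auto intro: order.antisym)
  then show ?thesis unfolding inc_mult_def by simp
qed

lemma inc_alg_iff: "f \<in> inc_alg X \<longleftrightarrow> (\<forall>x y. \<not> (x \<in> X \<and> y \<in> X \<and> x \<le> y) \<longrightarrow> f x y = 0)"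
  by (auto simp: inc_alg_def)

lemma inc_alg_nonzero_entry: "f \<in> inc_alg X \<Longrightarrow> f x y \<noteq> 0 \<Longrightarrow> x \<in> X \<and> y \<in> X \<and> x \<le> y"
  by (simp add: inc_alg_def)

lemma inc_alg_zero: "0 \<in> inc_alg X"
  by (simp add: inc_alg_iff)

lemma inc_alg_add: "f \<in> inc_alg X \<Longrightarrow> g \<in> inc_alg X \<Longrightarrow> f + g \<in> inc_alg X"
  by (simp add: inc_alg_iff)

lemma inc_alg_minus: "f \<in> inc_alg X \<Longrightarrow> - f \<in> inc_alg X"
  by (simp add: inc_alg_iff)

lemma inc_alg_diff: "f \<in> inc_alg X \<Longrightarrow> g \<in> inc_alg X \<Longrightarrow> f - g \<in> inc_alg X"
  by (simp add: inc_alg_iff)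

lemma inc_alg_scale: "f \<in> inc_alg X \<Longrightarrow> inc_scale c f \<in> inc_alg X"
  by (simp add: inc_alg_iff inc_scale_def)

lemma inc_alg_sum: "(\<And>i. i \<in> I \<Longrightarrow> F i \<in> inc_alg X) \<Longrightarrow> sum F I \<in> inc_alg X"
  by (induction I rule: infinite_finite_induct) (auto intro: inc_alg_zero inc_alg_add)

lemma inc_alg_unit: "p \<in> X \<Longrightarrow> q \<in> X \<Longrightarrow> p \<le> q \<Longrightarrow> inc_unit p q \<in> inc_alg X"
  by (auto simp: inc_alg_def inc_unit_def)

lemma inc_alg_one: "inc_one X \<in> inc_alg X"
  by (auto simp: inc_alg_def inc_one_def)

lemma inc_alg_mult:
  assumes f: "f \<in> inc_alg X" and g: "g \<in> inc_alg X"
  shows "f \<star> g \<in> inc_alg X"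
proof -
  have "f x z * g z y = 0"
    if "\<not> (x \<in> X \<and> y \<in> X \<and> x \<le> y)" and "z \<in> X" "x \<le> z" "z \<le> y" for x y z
    using that f g by (auto simp: inc_alg_iff intro: order.trans)
  then show ?thesis by (auto simp: inc_alg_iff inc_mult_def intro: sum.neutral)
qed

text \<open>The product m is that of the algebra or of its opposite algebra, so that the same lemmas
  serve for homomorphisms and for anti-homomorphisms.\<close>

lemma bilinear_expand:
  assumes m: "m = (\<star>) \<or> m = (\<lambda>f g. g \<star> f)"
  shows "m (\<Sum>i\<in>I. inc_scale (a i) (u i)) (\<Sum>j\<in>J. inc_scale (b j) (v j))
    = (\<Sum>i\<in>I. \<Sum>j\<in>J. inc_scale (a i * b j) (m (u i) (v j)))"
  using m
proof
  assume "m = (\<star>)"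
  then show ?thesis
    by (simp add: inc_mult_sum_left inc_mult_sum_right inc_mult_scale_left
        inc_mult_scale_right inc_scale_scale inc_scale_sum mult.commute sum.swap[of _ J])
next
  assume "m = (\<lambda>f g. g \<star> f)"
  then show ?thesis
    by (simp add: inc_mult_sum_left inc_mult_sum_right inc_mult_scale_left
        inc_mult_scale_right inc_scale_scale inc_scale_sum mult.commute)
qed

end

locale finite_incidence_algebra = incidence_algebra +
  assumes finite: "finite X"
begin

lemma inc_mult_assoc: "f \<star> g \<star> h = f \<star> (g \<star> h)"
proof -
  have "(\<Sum>z\<in>{z \<in> X. x \<le> z \<and> z \<le> y}. (\<Sum>w\<in>{w \<in> X. x \<le> w \<and> w \<le> z}. f x w * g w z) * h z y)
      = (\<Sum>w\<in>{w \<in> X. x \<le> w \<and> w \<le> y}. f x w * (\<Sum>z\<in>{z \<in> X. w \<le> z \<and> z \<le> y}. g w z * h z y))"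
    for x y
  proof -
    define I where "I = {z \<in> X. x \<le> z \<and> z \<le> y}"
    have fin_I: "finite I" using finite by (simp add: I_def)
    have "(\<Sum>z\<in>I. (\<Sum>w\<in>{w \<in> X. x \<le> w \<and> w \<le> z}. f x w * g w z) * h z y)
       = (\<Sum>z\<in>I. \<Sum>w\<in>{w\<in>I. w \<le> z}. f x w * g w z * h z y)"
      unfolding sum_distrib_right I_def by (intro sum.cong refl) (auto intro: order_trans)
    also have "\<dots> = (\<Sum>w\<in>I. \<Sum>z\<in>{z\<in>I. w \<le> z}. f x w * g w z * h z y)"
      by (rule sum.swap_restrict[OF fin_I fin_I])
    also have "\<dots> = (\<Sum>w\<in>I. f x w * (\<Sum>z\<in>{z \<in> X. w \<le> z \<and> z \<le> y}. g w z * h z y))"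
      unfolding sum_distrib_left I_def mult.assoc by (intro sum.cong refl) (auto intro: order_trans)
    finally show ?thesis unfolding I_def .
  qed
  then show ?thesis by (simp add: inc_mult_def fun_eq_iff)
qed

lemma unit_mult_unit:
  assumes "p \<in> X" "q \<in> X" "p \<le> q" "r \<le> s"
  shows "inc_unit p q \<star> inc_unit r s = (if q = r then inc_unit p s else 0)"
proof (intro ext)
  fix x y
  have "(inc_unit p q \<star> inc_unit r s) x y =
     (\<Sum>z\<in>{z \<in> X. x \<le> z \<and> z \<le> y}. if z = q then (if x = p \<and> q = r \<and> y = s then 1 else 0) else 0)"
    unfolding inc_mult_def inc_unit_def by (rule sum.cong) auto
  also have "\<dots> = (if q = r then inc_unit p s else 0) x y"
    using assms finite by (auto simp: inc_unit_def)
  finally show "(inc_unit p q \<star> inc_unit r s) x y = (if q = r then inc_unit p s else 0) x y" .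
qed

lemma inc_one_mult: "f \<in> inc_alg X \<Longrightarrow> inc_one X \<star> f = f"
proof (intro ext)
  fix x y
  assume f: "f \<in> inc_alg X"
  have "(inc_one X \<star> f) x y = (\<Sum>z\<in>{z \<in> X. x \<le> z \<and> z \<le> y}. if z = x then f x y else 0)"
    unfolding inc_mult_def inc_one_def by (rule sum.cong) auto
  also have "\<dots> = f x y" using f finite by (auto simp: inc_alg_def)
  finally show "(inc_one X \<star> f) x y = f x y" .
qed

lemma inc_mult_one: "f \<in> inc_alg X \<Longrightarrow> f \<star> inc_one X = f"
proof (intro ext)
  fix x y
  assume f: "f \<in> inc_alg X"
  have "(f \<star> inc_one X) x y = (\<Sum>z\<in>{z \<in> X. x \<le> z \<and> z \<le> y}. if z = y then f x y else 0)"
    unfolding inc_mult_def inc_one_def by (rule sum.cong) auto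
  also have "\<dots> = f x y" using f finite by (auto simp: inc_alg_def)
  finally show "(f \<star> inc_one X) x y = f x y" .
qed

lemma inc_idempotents_iff: "e \<in> inc_idempotents X \<longleftrightarrow> e \<in> inc_alg X \<and> e \<star> e = e"
  by (simp add: inc_idempotents_def)

lemmas unit_arith =
  inc_idempotents_iff inc_alg_add inc_alg_diff inc_alg_unit
  inc_mult_add_left inc_mult_add_right inc_mult_diff_left inc_mult_diff_right unit_mult_unit

lemma unit_idempotent: "p \<in> X \<Longrightarrow> inc_unit p p \<in> inc_idempotents X"
  by (simp add: unit_arith)

lemma one_minus_idempotent: "e \<in> inc_idempotents X \<Longrightarrow> inc_one X - e \<in> inc_idempotents X"
  by (simp add: inc_idempotents_iff inc_alg_one inc_alg_diff inc_mult_diff_left inc_mult_diff_right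
      inc_one_mult inc_mult_one)

lemma finite_inc_pairs: "finite (inc_pairs X)"
  using finite by (auto intro: finite_subset[of _ "X \<times> X"] simp: inc_pairs_def)

lemma inc_alg_decomp:
  assumes "f \<in> inc_alg X"
  shows "f = (\<Sum>i\<in>inc_pairs X. inc_scale (case_prod f i) (case_prod inc_unit i))"
proof (intro ext)
  fix x y
  have "(\<Sum>i\<in>inc_pairs X. inc_scale (case_prod f i) (case_prod inc_unit i)) x y
      = (\<Sum>pq\<in>inc_pairs X. if pq = (x, y) then f x y else 0)"
    unfolding sum_fun_apply2 by (rule sum.cong) (auto simp: inc_scale_def inc_unit_def split: if_splits)
  also have "\<dots> = f x y"
    using finite_inc_pairs assms by (auto simp: inc_pairs_def inc_alg_def)
  finally show "f x y = (\<Sum>i\<in>inc_pairs X. inc_scale (case_prod f i) (case_prod inc_unit i)) x y" ..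
qed

lemma inc_one_decomp: "inc_one X = (\<Sum>p\<in>X. inc_unit p p)"
proof (intro ext)
  fix x y
  have "(\<Sum>p\<in>X. inc_unit p p) x y = (\<Sum>p\<in>X. if p = x then (if x = y then 1 else 0) else 0)"
    unfolding sum_fun_apply2 inc_unit_def by (rule sum.cong) auto
  also have "\<dots> = inc_one X x y"
    using finite by (simp add: inc_one_def)
  finally show "inc_one X x y = (\<Sum>p\<in>X. inc_unit p p) x y" ..
qed

lemma anticommute_with_idempotent:
  assumes two: "(2::'b::field) \<noteq> 0"
    and e: "e \<star> e = e" and anti: "e \<star> f + f \<star> e = (0 :: 'a \<Rightarrow> 'a \<Rightarrow> 'b)"
  shows "e \<star> f = 0"
proof -
  have ef: "e \<star> f = - (f \<star> e)" using anti by (simp add: eq_neg_iff_add_eq_0)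
  have fe: "f \<star> e = - (e \<star> f)" using anti by (simp add: eq_neg_iff_add_eq_0 add.commute)
  have "e \<star> f \<star> e = - (f \<star> (e \<star> e))"
    by (simp only: ef inc_mult_minus_left inc_mult_assoc)
  also have "\<dots> = e \<star> f" by (simp only: e ef minus_minus)
  finally have "e \<star> f \<star> e = e \<star> f" .
  moreover have "e \<star> (f \<star> e) = - (e \<star> e \<star> f)"
    by (simp only: fe inc_mult_minus_right inc_mult_assoc)
  ultimately have "e \<star> f = - (e \<star> f)" by (simp only: e inc_mult_assoc)
  then have "e \<star> f + e \<star> f = 0" by (simp only: eq_neg_iff_add_eq_0)
  then show ?thesis by (rule fun_double_eq_zero[OF two])
qed

lemma peirce_split:
  assumes e: "e \<star> e = e" and ef: "e \<star> f = 0" and fe: "f \<star> e = 0"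
    and ge: "e \<star> g + g \<star> e = g" and gf: "f \<star> g + g \<star> f = g" and gg: "g \<star> g = 0"
  shows "g = e \<star> g \<star> f + f \<star> g \<star> e"
    and "(e \<star> g \<star> f) \<star> (f \<star> g \<star> e) = 0"
    and "(f \<star> g \<star> e) \<star> (e \<star> g \<star> f) = 0"
proof -
  define u where "u = e \<star> g \<star> f"
  define v where "v = f \<star> g \<star> e"
  have "e \<star> g = e \<star> (f \<star> g + g \<star> f)" using gf by simp
  also have "\<dots> = u"
    by (simp only: u_def inc_mult_add_right inc_mult_assoc[symmetric] ef inc_mult_zero_left add_0)
  finally have eg: "e \<star> g = u" .
  have "g \<star> e = (f \<star> g + g \<star> f) \<star> e" using gf by simp
  also have "\<dots> = v"
    by (simp only: v_def inc_mult_add_left inc_mult_assoc fe inc_mult_zero_right add_0_right)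
  finally have g_e: "g \<star> e = v" .
  have g: "g = u + v" using ge eg g_e by simp
  then show "g = e \<star> g \<star> f + f \<star> g \<star> e" by (simp only: u_def v_def)
  have "u \<star> u = e \<star> g \<star> (f \<star> e) \<star> g \<star> f"
    by (simp only: u_def inc_mult_assoc)
  then have uu: "u \<star> u = 0" by (simp only: fe inc_mult_zero_left inc_mult_zero_right)
  have "v \<star> v = f \<star> g \<star> (e \<star> f) \<star> g \<star> e"
    by (simp only: v_def inc_mult_assoc)
  then have vv: "v \<star> v = 0" by (simp only: ef inc_mult_zero_left inc_mult_zero_right)
  have "(u + v) \<star> (u + v) = 0" using gg g by simp
  then have anti: "u \<star> v + v \<star> u = 0"
    by (simp add: inc_mult_add_left inc_mult_add_right uu vv algebra_simps)
  have "e \<star> u = u" "e \<star> v = 0"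
    by (simp_all only: u_def v_def inc_mult_assoc[symmetric] e ef inc_mult_zero_left)
  then have "e \<star> (u \<star> v + v \<star> u) = u \<star> v"
    by (simp only: inc_mult_add_right inc_mult_assoc[symmetric] inc_mult_zero_left add_0_right)
  then have uv: "u \<star> v = 0" using anti by simp
  then show "(e \<star> g \<star> f) \<star> (f \<star> g \<star> e) = 0" by (simp only: u_def v_def)
  have "v \<star> u = 0" using anti uv by simp
  then show "(f \<star> g \<star> e) \<star> (e \<star> g \<star> f) = 0" by (simp only: u_def v_def)
qed

lemma jordan_triangle:
  assumes two: "(2::'b::field) \<noteq> 0"
    and e: "e \<star> e = e" and u: "u \<star> u = 0" and v: "v \<star> v = 0" and w: "w \<star> w = (0 :: 'a \<Rightarrow> 'a \<Rightarrow> 'b)"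
    and eu: "e \<star> u + u \<star> e = u" and ev: "e \<star> v + v \<star> e = v"
    and plus: "(e + u + v + w) \<star> (e + u + v + w) = e + u + v + w"
    and minus: "(e - u - v + w) \<star> (e - u - v + w) = e - u - v + w"
  shows "e \<star> w + w \<star> e + u \<star> v + v \<star> u = w"
proof -
  define t where "t = e \<star> w + w \<star> e + u \<star> v + v \<star> u"
  define r where "r = u \<star> w + w \<star> u + v \<star> w + w \<star> v"
  have "(e + u + v + w) \<star> (e + u + v + w)
      = e \<star> e + (e \<star> u + u \<star> e) + (e \<star> v + v \<star> e) + u \<star> u + v \<star> v + w \<star> w + t + r"
    unfolding t_def r_def by (simp add: inc_mult_add_left inc_mult_add_right algebra_simps)
  then have "w = t + r" using plus e u v w eu ev by (simp add: algebra_simps)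
  moreover have "(e - u - v + w) \<star> (e - u - v + w)
      = e \<star> e - (e \<star> u + u \<star> e) - (e \<star> v + v \<star> e) + u \<star> u + v \<star> v + w \<star> w + t - r"
    unfolding t_def r_def
    by (simp add: inc_mult_add_left inc_mult_add_right inc_mult_diff_left inc_mult_diff_right algebra_simps)
  then have "w = t - r" using minus e u v w eu ev by (simp add: algebra_simps)
  ultimately have "r + r = 0" by (simp add: algebra_simps)
  then have "r = 0" by (rule fun_double_eq_zero[OF two])
  then show ?thesis using \<open>w = t + r\<close> by (simp add: t_def)
qed

lemma idempotent_entry_between_diagonal:
  assumes e: "e \<in> inc_idempotents X" and nz: "e p q \<noteq> 0"
  shows "\<exists>s. p \<le> s \<and> s \<le> q \<and> e s s \<noteq> 0"
proof -
  have ee: "e \<star> e = e" and e_alg: "e \<in> inc_alg X" using e by (simp_all add: inc_idempotents_iff)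
  have "e p q = 0" if "card {z \<in> X. p \<le> z \<and> z \<le> q} = n" and "\<And>s. p \<le> s \<Longrightarrow> s \<le> q \<Longrightarrow> e s s = 0"
    for n p q
    using that
  proof (induction n arbitrary: p rule: less_induct)
    case (less n)
    show ?case
    proof (rule ccontr)
      assume nz: "e p q \<noteq> 0"
      then have pq: "p \<in> X" "q \<in> X" "p \<le> q" using e_alg by (auto simp: inc_alg_def)
      have "e p t * e t q = 0" if t: "t \<in> X" "p \<le> t" "t \<le> q" for t
      proof (cases "t = p")
        case True
        then show ?thesis using less.prems(2) pq by simp
      next
        case False
        then have "{z \<in> X. t \<le> z \<and> z \<le> q} \<subset> {z \<in> X. p \<le> z \<and> z \<le> q}"
          using t pq by (auto intro: order.trans dest: order.antisym)
        moreover have "finite {z \<in> X. p \<le> z \<and> z \<le> q}" using finite by simp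
        ultimately have "card {z \<in> X. t \<le> z \<and> z \<le> q} < n"
          using psubset_card_mono less.prems(1) by metis
        then have "e t q = 0"
          by (rule less.IH[OF _ refl]) (use less.prems(2) t in \<open>meson order.trans\<close>)
        then show ?thesis by simp
      qed
      then have "(e \<star> e) p q = 0" unfolding inc_mult_def by (simp add: sum.neutral)
      then show False using nz ee by simp
    qed
  qed
  then show ?thesis using nz by blast
qed

end

section \<open>Linear maps preserving idempotents\<close>

locale idempotent_preserving = finite_incidence_algebra X
  for X :: "'a::order set" +
  fixes \<phi> :: "('a \<Rightarrow> 'a \<Rightarrow> 'b::field) \<Rightarrow> ('a \<Rightarrow> 'a \<Rightarrow> 'b)"
  assumes linear: "inc_linear X \<phi>"
    and maps_into: "f \<in> inc_alg X \<Longrightarrow> \<phi> f \<in> inc_alg X"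
    and preserves_idempotents: "\<phi> ` inc_idempotents X \<subseteq> inc_idempotents X"
    and two_nonzero: "(2::'b) \<noteq> 0"
begin

lemma phi_add: "f \<in> inc_alg X \<Longrightarrow> g \<in> inc_alg X \<Longrightarrow> \<phi> (f + g) = \<phi> f + \<phi> g"
  using linear by (simp add: inc_linear_def plus_fun_def)

lemma phi_scale: "f \<in> inc_alg X \<Longrightarrow> \<phi> (inc_scale c f) = inc_scale c (\<phi> f)"
  using linear by (simp add: inc_linear_def inc_scale_def)

lemma phi_zero: "\<phi> 0 = 0"
  using phi_scale[OF inc_alg_zero, of 0] by (simp add: inc_scale_def zero_fun_def)

lemma phi_minus: "f \<in> inc_alg X \<Longrightarrow> \<phi> (- f) = - \<phi> f"
  using phi_scale[of f "- 1"] by (simp add: inc_scale_minus_one)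

lemma phi_diff: "f \<in> inc_alg X \<Longrightarrow> g \<in> inc_alg X \<Longrightarrow> \<phi> (f - g) = \<phi> f - \<phi> g"
  using phi_add[of f "- g"] phi_minus[of g] inc_alg_minus[of g] by simp

lemma phi_sum: "(\<And>i. i \<in> I \<Longrightarrow> F i \<in> inc_alg X) \<Longrightarrow> \<phi> (sum F I) = (\<Sum>i\<in>I. \<phi> (F i))"
proof (induction I rule: infinite_finite_induct)
  case (insert i J)
  then have "F i \<in> inc_alg X" "sum F J \<in> inc_alg X" "\<phi> (sum F J) = (\<Sum>i\<in>J. \<phi> (F i))"
    by (auto intro: inc_alg_sum)
  with insert.hyps show ?case by (simp only: sum.insert simp_thms phi_add)
qed (simp_all add: phi_zero)

lemma phi_idempotent: "e \<in> inc_idempotents X \<Longrightarrow> \<phi> e \<in> inc_idempotents X"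
  using preserves_idempotents by blast

lemma phi_idempotent_mult: "e \<in> inc_idempotents X \<Longrightarrow> \<phi> e \<star> \<phi> e = \<phi> e"
  using phi_idempotent by (simp add: inc_idempotents_iff)

lemma jordan_nilpotent:
  assumes a: "a \<in> inc_idempotents X" and n: "n \<in> inc_alg X"
    and plus: "a + n \<in> inc_idempotents X" and minus: "a - n \<in> inc_idempotents X"
  shows "\<phi> n \<star> \<phi> n = 0" and "\<phi> a \<star> \<phi> n + \<phi> n \<star> \<phi> a = \<phi> n"
proof -
  have a_alg: "a \<in> inc_alg X" using a by (simp add: inc_idempotents_iff)
  let ?A = "\<phi> a" and ?N = "\<phi> n"
  have A: "?A \<star> ?A = ?A" by (rule phi_idempotent_mult[OF a])
  have "(?A + ?N) \<star> (?A + ?N) = ?A + ?N"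
    using phi_idempotent_mult[OF plus] by (simp only: phi_add[OF a_alg n])
  then have e1: "(?A \<star> ?N + ?N \<star> ?A) + ?N \<star> ?N = ?N"
    by (simp add: inc_mult_add_left inc_mult_add_right A algebra_simps)
  have "(?A - ?N) \<star> (?A - ?N) = ?A - ?N"
    using phi_idempotent_mult[OF minus] by (simp only: phi_diff[OF a_alg n])
  then have e2: "- (?A \<star> ?N + ?N \<star> ?A) + ?N \<star> ?N = - ?N"
    by (simp add: inc_mult_diff_left inc_mult_diff_right A algebra_simps)
  have "?N \<star> ?N + ?N \<star> ?N = 0"
    using arg_cong2[OF e1 e2, of "(+)"] by (simp add: algebra_simps)
  then show n2: "?N \<star> ?N = 0" by (rule fun_double_eq_zero[OF two_nonzero])
  show "?A \<star> ?N + ?N \<star> ?A = ?N" using e1 n2 by simp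
qed

lemma jordan_orthogonal:
  assumes a: "a \<in> inc_idempotents X" and b: "b \<in> inc_idempotents X"
    and ab: "a + b \<in> inc_idempotents X"
  shows "\<phi> a \<star> \<phi> b + \<phi> b \<star> \<phi> a = 0"
proof -
  have "a \<in> inc_alg X" "b \<in> inc_alg X" using a b by (simp_all add: inc_idempotents_iff)
  then have "(\<phi> a + \<phi> b) \<star> (\<phi> a + \<phi> b) = \<phi> a + \<phi> b"
    using phi_idempotent_mult[OF ab] by (simp only: phi_add)
  then show ?thesis
    by (simp add: inc_mult_add_left inc_mult_add_right phi_idempotent_mult[OF a]
        phi_idempotent_mult[OF b] algebra_simps)
qed

lemma jordan_one:
  assumes a: "a \<in> inc_idempotents X"
  shows "\<phi> a \<star> \<phi> (inc_one X) + \<phi> (inc_one X) \<star> \<phi> a = \<phi> a + \<phi> a"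
proof -
  have a_alg: "a \<in> inc_alg X" using a by (simp add: inc_idempotents_iff)
  have "inc_one X \<in> inc_idempotents X"
    by (simp add: inc_idempotents_iff inc_alg_one inc_one_mult)
  then have "\<phi> a \<star> \<phi> (inc_one X - a) + \<phi> (inc_one X - a) \<star> \<phi> a = 0"
    using jordan_orthogonal[OF a one_minus_idempotent[OF a]] by simp
  then show ?thesis
    by (simp add: phi_diff[OF inc_alg_one a_alg] inc_mult_diff_left inc_mult_diff_right
        phi_idempotent_mult[OF a] algebra_simps)
qed

definition \<gamma> :: "'a \<Rightarrow> 'a \<Rightarrow> 'a \<Rightarrow> 'a \<Rightarrow> 'b" where
  "\<gamma> p q = \<phi> (inc_unit p q)"

lemma gamma_alg: "p \<in> X \<Longrightarrow> q \<in> X \<Longrightarrow> p \<le> q \<Longrightarrow> \<gamma> p q \<in> inc_alg X"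
  unfolding \<gamma>_def by (rule maps_into[OF inc_alg_unit])

lemma gamma_idempotent: "p \<in> X \<Longrightarrow> \<gamma> p p \<star> \<gamma> p p = \<gamma> p p"
  unfolding \<gamma>_def by (rule phi_idempotent_mult[OF unit_idempotent])

lemma gamma_orthogonal:
  assumes "p \<in> X" "q \<in> X" "p \<noteq> q"
  shows "\<gamma> p p \<star> \<gamma> q q = 0"
proof (rule anticommute_with_idempotent[OF two_nonzero])
  show "\<gamma> p p \<star> \<gamma> p p = \<gamma> p p"
    using assms by (simp add: gamma_idempotent)
  have "inc_unit p p + inc_unit q q \<in> inc_idempotents X"
    using assms by (simp add: unit_arith)
  then show "\<gamma> p p \<star> \<gamma> q q + \<gamma> q q \<star> \<gamma> p p = 0"
    unfolding \<gamma>_def using assms by (intro jordan_orthogonal unit_idempotent)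
qed

lemma phi_decomp:
  assumes f: "f \<in> inc_alg X"
  shows "\<phi> f = (\<Sum>i\<in>inc_pairs X. inc_scale (case_prod f i) (case_prod \<gamma> i))"
proof -
  have "\<phi> f = \<phi> (\<Sum>i\<in>inc_pairs X. inc_scale (case_prod f i) (case_prod inc_unit i))"
    using inc_alg_decomp[OF f] by simp
  also have "\<dots> = (\<Sum>i\<in>inc_pairs X. \<phi> (inc_scale (case_prod f i) (case_prod inc_unit i)))"
    by (subst phi_sum) (auto simp: inc_pairs_def prod.case_distrib intro!: inc_alg_scale inc_alg_unit)
  also have "\<dots> = (\<Sum>i\<in>inc_pairs X. inc_scale (case_prod f i) (case_prod \<gamma> i))"
    by (rule sum.cong) (auto simp: inc_pairs_def \<gamma>_def intro!: phi_scale inc_alg_unit)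
  finally show ?thesis .
qed

lemma gamma_jordan_one:
  assumes p: "p \<in> X" and q: "q \<in> X" and pq: "p \<le> q"
  shows "\<gamma> p q \<star> \<phi> (inc_one X) + \<phi> (inc_one X) \<star> \<gamma> p q = \<gamma> p q + \<gamma> p q"
proof (cases "p = q")
  case True
  then show ?thesis unfolding \<gamma>_def using jordan_one[OF unit_idempotent[OF p]] by simp
next
  case False
  let ?P = "\<phi> (inc_one X)"
  have "inc_unit p p + inc_unit p q \<in> inc_idempotents X"
    using assms False by (simp add: unit_arith)
  note sum = jordan_one[OF this] and diag = jordan_one[OF unit_idempotent[OF p]]
  have eq: "\<gamma> p q = \<phi> (inc_unit p p + inc_unit p q) - \<phi> (inc_unit p p)"
    using assms by (simp add: \<gamma>_def phi_add inc_alg_unit)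
  have "(\<phi> (inc_unit p p + inc_unit p q) \<star> ?P + ?P \<star> \<phi> (inc_unit p p + inc_unit p q))
      - (\<phi> (inc_unit p p) \<star> ?P + ?P \<star> \<phi> (inc_unit p p))
      = (\<phi> (inc_unit p p + inc_unit p q) + \<phi> (inc_unit p p + inc_unit p q))
      - (\<phi> (inc_unit p p) + \<phi> (inc_unit p p))"
    by (simp only: sum diag)
  then show ?thesis
    by (simp add: eq inc_mult_diff_left inc_mult_diff_right algebra_simps)
qed

lemma phi_jordan_one:
  assumes f: "f \<in> inc_alg X"
  shows "\<phi> f \<star> \<phi> (inc_one X) + \<phi> (inc_one X) \<star> \<phi> f = \<phi> f + \<phi> f"
proof -
  let ?P = "\<phi> (inc_one X)"
  have "\<phi> f \<star> ?P + ?P \<star> \<phi> f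
      = (\<Sum>i\<in>inc_pairs X. inc_scale (case_prod f i) (case_prod \<gamma> i \<star> ?P + ?P \<star> case_prod \<gamma> i))"
    unfolding phi_decomp[OF f] inc_mult_sum_left inc_mult_sum_right sum.distrib[symmetric]
    by (simp add: prod.case_distrib inc_mult_scale_left inc_mult_scale_right inc_scale_add
        case_prod_unfold)
  also have "\<dots> = (\<Sum>i\<in>inc_pairs X. inc_scale (case_prod f i) (case_prod \<gamma> i + case_prod \<gamma> i))"
    by (rule sum.cong) (auto simp: inc_pairs_def gamma_jordan_one)
  also have "\<dots> = \<phi> f + \<phi> f"
    unfolding phi_decomp[OF f] inc_scale_add sum.distrib[symmetric] by (simp add: case_prod_unfold)
  finally show ?thesis .
qed

lemma jordan_anticommute:
  assumes a: "a \<in> inc_idempotents X" and m: "m \<in> inc_alg X" and n: "n \<in> inc_alg X"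
    and plus: "a + (m + n) \<in> inc_idempotents X" and minus: "a - (m + n) \<in> inc_idempotents X"
    and mm: "\<phi> m \<star> \<phi> m = 0" and nn: "\<phi> n \<star> \<phi> n = 0"
  shows "\<phi> m \<star> \<phi> n + \<phi> n \<star> \<phi> m = 0"
proof -
  have "(\<phi> m + \<phi> n) \<star> (\<phi> m + \<phi> n) = 0"
    using jordan_nilpotent(1)[OF a inc_alg_add[OF m n] plus minus] by (simp only: phi_add[OF m n])
  then show ?thesis by (simp add: inc_mult_add_left inc_mult_add_right mm nn algebra_simps)
qed

lemma gamma_row:
  assumes p: "p \<in> X" and q: "q \<in> X" and pq: "p < q"
  shows "\<gamma> p q \<star> \<gamma> p q = 0"
    and "\<gamma> p p \<star> \<gamma> p q + \<gamma> p q \<star> \<gamma> p p = \<gamma> p q"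
    and "\<gamma> q q \<star> \<gamma> p q + \<gamma> p q \<star> \<gamma> q q = \<gamma> p q"
proof -
  have n: "inc_unit p q \<in> inc_alg X" using assms by (simp add: inc_alg_unit)
  have "inc_unit p p + inc_unit p q \<in> inc_idempotents X" "inc_unit p p - inc_unit p q \<in> inc_idempotents X"
    "inc_unit q q + inc_unit p q \<in> inc_idempotents X" "inc_unit q q - inc_unit p q \<in> inc_idempotents X"
    using assms by (auto simp: unit_arith)
  note left = jordan_nilpotent[OF unit_idempotent[OF p] n this(1,2)]
    and right = jordan_nilpotent[OF unit_idempotent[OF q] n this(3,4)]
  show "\<gamma> p q \<star> \<gamma> p q = 0"
    and "\<gamma> p p \<star> \<gamma> p q + \<gamma> p q \<star> \<gamma> p p = \<gamma> p q"
    and "\<gamma> q q \<star> \<gamma> p q + \<gamma> p q \<star> \<gamma> q q = \<gamma> p q"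
    using left right by (simp_all add: \<gamma>_def)
qed

lemma gamma_anticommute_source:
  assumes p: "p \<in> X" and q: "q \<in> X" and r: "r \<in> X" and pq: "p < q" and pr: "p < r" and qr: "q \<noteq> r"
  shows "\<gamma> p q \<star> \<gamma> p r + \<gamma> p r \<star> \<gamma> p q = 0"
proof -
  have "inc_unit p p + (inc_unit p q + inc_unit p r) \<in> inc_idempotents X"
    "inc_unit p p - (inc_unit p q + inc_unit p r) \<in> inc_idempotents X"
    using assms by (auto simp: unit_arith)
  from jordan_anticommute[OF unit_idempotent[OF p] _ _ this gamma_row(1)[OF p q pq, unfolded \<gamma>_def]
      gamma_row(1)[OF p r pr, unfolded \<gamma>_def]]
  show ?thesis using assms by (simp add: \<gamma>_def inc_alg_unit)
qed

lemma gamma_anticommute_target: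
  assumes p: "p \<in> X" and q: "q \<in> X" and r: "r \<in> X" and pr: "p < r" and qr: "q < r" and pq: "p \<noteq> q"
  shows "\<gamma> p r \<star> \<gamma> q r + \<gamma> q r \<star> \<gamma> p r = 0"
proof -
  have "inc_unit r r + (inc_unit p r + inc_unit q r) \<in> inc_idempotents X"
    "inc_unit r r - (inc_unit p r + inc_unit q r) \<in> inc_idempotents X"
    using assms by (auto simp: unit_arith)
  from jordan_anticommute[OF unit_idempotent[OF r] _ _ this gamma_row(1)[OF p r pr, unfolded \<gamma>_def]
      gamma_row(1)[OF q r qr, unfolded \<gamma>_def]]
  show ?thesis using assms by (simp add: \<gamma>_def inc_alg_unit)
qed

end

locale bijective_idempotent_preserving = idempotent_preserving +
  assumes bij: "bij_betw \<phi> (inc_alg X) (inc_alg X)"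
begin

lemma phi_one: "\<phi> (inc_one X) = inc_one X"
proof -
  obtain f where f: "f \<in> inc_alg X" "\<phi> f = inc_one X"
    using bij inc_alg_one by (metis bij_betw_imp_surj_on imageE)
  let ?P = "\<phi> (inc_one X)"
  have P: "?P \<in> inc_alg X" by (rule maps_into[OF inc_alg_one])
  have "inc_one X \<star> ?P + ?P \<star> inc_one X = inc_one X + inc_one X"
    using phi_jordan_one[OF f(1)] by (simp only: f(2))
  then have "(?P - inc_one X) + (?P - inc_one X) = 0"
    by (simp add: inc_one_mult inc_mult_one P algebra_simps)
  then show ?thesis using fun_double_eq_zero[OF two_nonzero] by fastforce
qed

lemma gamma_nonzero:
  assumes "p \<in> X" "q \<in> X" "p \<le> q"
  shows "\<gamma> p q \<noteq> 0"
proof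
  assume "\<gamma> p q = 0"
  then have "\<phi> (inc_unit p q) = \<phi> 0" by (simp add: \<gamma>_def phi_zero)
  then have "inc_unit p q = (0 :: 'a \<Rightarrow> 'a \<Rightarrow> 'b)"
    using bij assms inc_alg_unit inc_alg_zero by (metis bij_betw_imp_inj_on inj_onD)
  then show False by (metis inc_unit_def zero_fun_apply zero_neq_one)
qed

lemma sum_gamma_diag: "(\<Sum>p\<in>X. \<gamma> p p) = inc_one X"
proof -
  have "(\<Sum>p\<in>X. \<gamma> p p) = \<phi> (\<Sum>p\<in>X. inc_unit p p)"
    unfolding \<gamma>_def by (rule phi_sum[symmetric]) (simp add: inc_alg_unit)
  then show ?thesis by (simp add: inc_one_decomp[symmetric] phi_one)
qed

section \<open>The diagonal idempotents\<close>

lemma gamma_diag_idempotent_entry: "p \<in> X \<Longrightarrow> \<gamma> p p x x = 0 \<or> \<gamma> p p x x = 1"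
proof (cases "x \<in> X")
  case True
  assume "p \<in> X"
  then have "\<gamma> p p x x * \<gamma> p p x x = \<gamma> p p x x"
    using inc_mult_diag[OF True] gamma_idempotent by metis
  then show ?thesis by (metis mult_cancel_right1 mult_zero_right)
next
  case False
  assume "p \<in> X"
  then show ?thesis using inc_alg_nonzero_entry[OF gamma_alg] False by blast
qed

lemma gamma_diag_orthogonal_entry:
  assumes p: "p \<in> X" and q: "q \<in> X" and pq: "p \<noteq> q" and nz: "\<gamma> p p x x \<noteq> 0"
  shows "\<gamma> q q x x = 0"
proof -
  have x: "x \<in> X" using inc_alg_nonzero_entry[OF gamma_alg[OF p p] nz] by simp
  have "\<gamma> p p x x * \<gamma> q q x x = 0"
    using inc_mult_diag[OF x, of "\<gamma> p p" "\<gamma> q q"] gamma_orthogonal[OF p q pq] by simp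
  then show ?thesis using nz by simp
qed

lemma gamma_diag_sum_entry: "x \<in> X \<Longrightarrow> (\<Sum>p\<in>X. \<gamma> p p x x) = 1"
  using fun_cong[OF fun_cong[OF sum_gamma_diag, of x], of x]
  by (simp add: sum_fun_apply2 inc_one_def)

lemma gamma_diag_exists: "p \<in> X \<Longrightarrow> \<exists>x\<in>X. \<gamma> p p x x \<noteq> 0"
proof (rule ccontr)
  assume p: "p \<in> X" and "\<not> (\<exists>x\<in>X. \<gamma> p p x x \<noteq> 0)"
  then have diag: "\<gamma> p p s s = 0" for s
    using gamma_alg[OF p p] by (cases "s \<in> X") (auto simp: inc_alg_def)
  have "\<gamma> p p \<in> inc_idempotents X"
    using p by (simp add: inc_idempotents_iff gamma_alg gamma_idempotent)
  then have "\<gamma> p p a b = 0" for a b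
    using idempotent_entry_between_diagonal diag by blast
  then show False using gamma_nonzero[OF p p] by (auto simp: fun_eq_iff)
qed

text \<open>Each point of X carries a nonzero diagonal entry of exactly one \<gamma> p p; since X is finite,
  the resulting map X \<rightarrow> X is onto, hence injective, so each \<gamma> p p has exactly one such entry.\<close>

lemma gamma_diag_unique: "p \<in> X \<Longrightarrow> \<exists>!x. \<gamma> p p x x \<noteq> 0"
proof -
  have "\<exists>p. p \<in> X \<and> \<gamma> p p x x \<noteq> 0" if "x \<in> X" for x
  proof (rule ccontr)
    assume "\<not> ?thesis"
    then have "(\<Sum>p\<in>X. \<gamma> p p x x) = 0" by (simp add: sum.neutral)
    with gamma_diag_sum_entry[OF that] show False by simp
  qed
  then obtain \<tau> where \<tau>: "\<And>x. x \<in> X \<Longrightarrow> \<tau> x \<in> X \<and> \<gamma> (\<tau> x) (\<tau> x) x x \<noteq> 0"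
    by metis
  have \<tau>_eq: "\<tau> x = p" if "x \<in> X" "p \<in> X" "\<gamma> p p x x \<noteq> 0" for x p
    using that \<tau>[OF that(1)] gamma_diag_orthogonal_entry by metis
  have "\<tau> ` X = X"
  proof
    show "\<tau> ` X \<subseteq> X" using \<tau> by auto
    show "X \<subseteq> \<tau> ` X"
    proof
      fix p assume p: "p \<in> X"
      then obtain x where "x \<in> X" "\<gamma> p p x x \<noteq> 0" using gamma_diag_exists by blast
      with p show "p \<in> \<tau> ` X" using \<tau>_eq by (metis rev_image_eqI)
    qed
  qed
  then have "inj_on \<tau> X" using finite by (simp add: eq_card_imp_inj_on)
  moreover have "x \<in> X" if "p \<in> X" "\<gamma> p p x x \<noteq> 0" for p x
    using inc_alg_nonzero_entry[OF gamma_alg that(2)] that(1) by simp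
  ultimately show "p \<in> X \<Longrightarrow> \<exists>!x. \<gamma> p p x x \<noteq> 0"
    using gamma_diag_exists \<tau>_eq by (metis inj_onD)
qed

definition \<sigma> :: "'a \<Rightarrow> 'a" where
  "\<sigma> p = (THE x. \<gamma> p p x x \<noteq> 0)"

lemma gamma_diag:
  assumes p: "p \<in> X"
  shows "\<gamma> p p x x = (if x = \<sigma> p then 1 else 0)"
proof -
  have "\<gamma> p p (\<sigma> p) (\<sigma> p) \<noteq> 0"
    unfolding \<sigma>_def by (rule theI'[OF gamma_diag_unique[OF p]])
  moreover have "x = \<sigma> p" if "\<gamma> p p x x \<noteq> 0"
    unfolding \<sigma>_def by (rule the1_equality[OF gamma_diag_unique[OF p] that, symmetric])
  ultimately show ?thesis using gamma_diag_idempotent_entry[OF p] by metis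
qed

lemma gamma_diag_support:
  assumes p: "p \<in> X" and nz: "\<gamma> p p a b \<noteq> 0"
  shows "a \<le> \<sigma> p \<and> \<sigma> p \<le> b"
proof -
  have "\<gamma> p p \<in> inc_idempotents X"
    using p by (simp add: inc_idempotents_iff gamma_alg gamma_idempotent)
  then obtain s where "a \<le> s" "s \<le> b" "\<gamma> p p s s \<noteq> 0"
    using idempotent_entry_between_diagonal nz by blast
  then show ?thesis by (simp add: gamma_diag[OF p] split: if_splits)
qed

definition corner :: "'a \<Rightarrow> 'a \<Rightarrow> ('a \<Rightarrow> 'a \<Rightarrow> 'b) \<Rightarrow> bool" where
  "corner x y b \<longleftrightarrow> b \<in> inc_alg X \<and> \<gamma> x x \<star> b \<star> \<gamma> y y = b"

lemma corner_absorb: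
  assumes "x \<in> X" "y \<in> X" "corner x y b"
  shows "\<gamma> x x \<star> b = b" and "b \<star> \<gamma> y y = b"
proof -
  have b: "\<gamma> x x \<star> b \<star> \<gamma> y y = b" using assms(3) by (simp add: corner_def)
  have "\<gamma> x x \<star> b = \<gamma> x x \<star> (\<gamma> x x \<star> b \<star> \<gamma> y y)" by (simp only: b)
  also have "\<dots> = \<gamma> x x \<star> b \<star> \<gamma> y y"
    by (simp only: inc_mult_assoc[symmetric] gamma_idempotent[OF assms(1)])
  finally show "\<gamma> x x \<star> b = b" using b by simp
  have "b \<star> \<gamma> y y = \<gamma> x x \<star> b \<star> \<gamma> y y \<star> \<gamma> y y" by (simp only: b)
  also have "\<dots> = \<gamma> x x \<star> b \<star> \<gamma> y y"
    by (simp only: inc_mult_assoc gamma_idempotent[OF assms(2)])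
  finally show "b \<star> \<gamma> y y = b" using b by simp
qed

lemma corner_entry_path:
  assumes "corner x y b" and "b a c \<noteq> 0"
  shows "\<exists>t s. \<gamma> x x a t \<noteq> 0 \<and> b t s \<noteq> 0 \<and> \<gamma> y y s c \<noteq> 0"
proof -
  have "(\<gamma> x x \<star> b \<star> \<gamma> y y) a c \<noteq> 0" using assms by (simp add: corner_def)
  then have "(\<Sum>s\<in>{z \<in> X. a \<le> z \<and> z \<le> c}. (\<gamma> x x \<star> b) a s * \<gamma> y y s c) \<noteq> 0"
    unfolding inc_mult_def[of X "\<gamma> x x \<star> b"] .
  then obtain s where s: "(\<gamma> x x \<star> b) a s * \<gamma> y y s c \<noteq> 0"
    by (rule sum.not_neutral_contains_not_neutral)
  then have "(\<Sum>t\<in>{z \<in> X. a \<le> z \<and> z \<le> s}. \<gamma> x x a t * b t s) \<noteq> 0"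
    by (simp add: inc_mult_def[of X "\<gamma> x x"])
  then obtain t where "\<gamma> x x a t * b t s \<noteq> 0"
    by (rule sum.not_neutral_contains_not_neutral)
  with s show ?thesis by auto
qed

lemma corner_support:
  assumes "x \<in> X" "y \<in> X" "corner x y b" "b a c \<noteq> 0"
  shows "a \<le> \<sigma> x \<and> \<sigma> y \<le> c"
  using corner_entry_path[OF assms(3,4)] gamma_diag_support assms(1,2) by (blast intro: order.trans)

lemma corner_entry:
  assumes x: "x \<in> X" and y: "y \<in> X" and b: "corner x y b" and nz: "b \<noteq> 0"
  shows "b (\<sigma> x) (\<sigma> y) \<noteq> 0"
proof -
  obtain a c where "b a c \<noteq> 0" using nz by (auto simp: fun_eq_iff)
  then obtain t s where ts: "\<gamma> x x a t \<noteq> 0" "b t s \<noteq> 0" "\<gamma> y y s c \<noteq> 0"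
    using corner_entry_path[OF b] by blast
  have "t = \<sigma> x" "s = \<sigma> y"
    using gamma_diag_support[OF x ts(1)] gamma_diag_support[OF y ts(3)] corner_support[OF x y b ts(2)]
    by (auto intro: order.antisym)
  with ts(2) show ?thesis by simp
qed

lemma corner_mult_nonzero:
  assumes x: "x \<in> X" and y: "y \<in> X" and z: "z \<in> X"
    and a: "corner x y a" and b: "corner y z b" and "a \<noteq> 0" and "b \<noteq> 0"
  shows "a \<star> b \<noteq> 0"
proof -
  have a1: "a (\<sigma> x) (\<sigma> y) \<noteq> 0" and b1: "b (\<sigma> y) (\<sigma> z) \<noteq> 0"
    using corner_entry assms by blast+
  have mem: "\<sigma> y \<in> {w \<in> X. \<sigma> x \<le> w \<and> w \<le> \<sigma> z}"
    using inc_alg_nonzero_entry[of a, OF _ a1] inc_alg_nonzero_entry[of b, OF _ b1] a b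
    by (simp add: corner_def)
  have "a (\<sigma> x) w * b w (\<sigma> z) = 0" if "w \<noteq> \<sigma> y" for w
    using corner_support[OF x y a, of "\<sigma> x" w] corner_support[OF y z b, of w "\<sigma> z"] that
    by (auto intro: order.antisym)
  then have "(a \<star> b) (\<sigma> x) (\<sigma> z)
      = (\<Sum>w\<in>{w \<in> X. \<sigma> x \<le> w \<and> w \<le> \<sigma> z}. if w = \<sigma> y then a (\<sigma> x) (\<sigma> y) * b (\<sigma> y) (\<sigma> z) else 0)"
    unfolding inc_mult_def by (intro sum.cong) auto
  also have "\<dots> = a (\<sigma> x) (\<sigma> y) * b (\<sigma> y) (\<sigma> z)"
    using mem finite by simp
  finally have "(a \<star> b) (\<sigma> x) (\<sigma> z) \<noteq> 0" using a1 b1 by simp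
  then show ?thesis by (auto simp: fun_eq_iff)
qed

lemma corner_orthogonal:
  assumes x: "x \<in> X" and y: "y \<in> X" and r: "r \<in> X" and b: "corner x y b"
  shows "r \<noteq> x \<Longrightarrow> \<gamma> r r \<star> b = 0" and "r \<noteq> y \<Longrightarrow> b \<star> \<gamma> r r = 0"
proof -
  assume "r \<noteq> x"
  then have "\<gamma> r r \<star> (\<gamma> x x \<star> b) = 0"
    by (simp add: inc_mult_assoc[symmetric] gamma_orthogonal[OF r x])
  then show "\<gamma> r r \<star> b = 0" by (simp only: corner_absorb[OF x y b])
next
  assume "r \<noteq> y"
  then have "b \<star> \<gamma> y y \<star> \<gamma> r r = 0"
    by (simp add: inc_mult_assoc gamma_orthogonal[OF y r])
  then show "b \<star> \<gamma> r r = 0" by (simp only: corner_absorb[OF x y b])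
qed

section \<open>Peirce components of the off-diagonal images\<close>

text \<open>The names: if fwd p q \<noteq> 0 then \<sigma> p \<le> \<sigma> q, and if bwd p q \<noteq> 0 then \<sigma> q \<le> \<sigma> p.\<close>

definition fwd :: "'a \<Rightarrow> 'a \<Rightarrow> 'a \<Rightarrow> 'a \<Rightarrow> 'b" where
  "fwd p q = \<gamma> p p \<star> \<gamma> p q \<star> \<gamma> q q"

definition bwd :: "'a \<Rightarrow> 'a \<Rightarrow> 'a \<Rightarrow> 'a \<Rightarrow> 'b" where
  "bwd p q = \<gamma> q q \<star> \<gamma> p q \<star> \<gamma> p p"

lemma gamma_split:
  assumes p: "p \<in> X" and q: "q \<in> X" and pq: "p < q"
  shows "\<gamma> p q = fwd p q + bwd p q" and "fwd p q \<star> bwd p q = 0" and "bwd p q \<star> fwd p q = 0"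
  using peirce_split[OF gamma_idempotent[OF p]
      gamma_orthogonal[OF p q] gamma_orthogonal[OF q p] gamma_row(2,3,1)[OF p q pq]] pq
  unfolding fwd_def bwd_def by auto

lemma corner_fwd: "p \<in> X \<Longrightarrow> q \<in> X \<Longrightarrow> p < q \<Longrightarrow> corner p q (fwd p q)"
  by (simp add: corner_def fwd_def inc_alg_mult gamma_alg inc_mult_assoc[symmetric] gamma_idempotent)
    (simp add: inc_mult_assoc gamma_idempotent)

lemma corner_bwd: "p \<in> X \<Longrightarrow> q \<in> X \<Longrightarrow> p < q \<Longrightarrow> corner q p (bwd p q)"
  by (simp add: corner_def bwd_def inc_alg_mult gamma_alg inc_mult_assoc[symmetric] gamma_idempotent)
    (simp add: inc_mult_assoc gamma_idempotent)

lemma fwd_eq_zero_iff: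
  assumes p: "p \<in> X" and q: "q \<in> X" and pq: "p < q"
  shows "fwd p q = 0 \<longleftrightarrow> bwd p q \<noteq> 0"
proof -
  have "\<not> (fwd p q \<noteq> 0 \<and> bwd p q \<noteq> 0)"
    using corner_mult_nonzero[OF p q p corner_fwd[OF p q pq] corner_bwd[OF p q pq]]
      gamma_split(2)[OF p q pq] by blast
  moreover have "\<not> (fwd p q = 0 \<and> bwd p q = 0)"
    using gamma_split(1)[OF p q pq] gamma_nonzero[OF p q] pq by force
  ultimately show ?thesis by blast
qed

lemma fwd_bwd_absorb:
  assumes p: "p \<in> X" and q: "q \<in> X" and pq: "p < q"
  shows "\<gamma> p p \<star> fwd p q = fwd p q" and "fwd p q \<star> \<gamma> q q = fwd p q"
    and "\<gamma> q q \<star> bwd p q = bwd p q" and "bwd p q \<star> \<gamma> p p = bwd p q"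
  using corner_absorb[OF p q corner_fwd[OF p q pq]] corner_absorb[OF q p corner_bwd[OF p q pq]]
  by simp_all

lemma gamma_mult_diag:
  assumes p: "p \<in> X" and q: "q \<in> X" and pq: "p < q"
  shows "\<gamma> p p \<star> \<gamma> p q = fwd p q" and "\<gamma> p q \<star> \<gamma> q q = fwd p q"
    and "\<gamma> q q \<star> \<gamma> p q = bwd p q" and "\<gamma> p q \<star> \<gamma> p p = bwd p q"
    and "r \<in> X \<Longrightarrow> r \<noteq> p \<Longrightarrow> r \<noteq> q \<Longrightarrow> \<gamma> r r \<star> \<gamma> p q = 0"
    and "r \<in> X \<Longrightarrow> r \<noteq> p \<Longrightarrow> r \<noteq> q \<Longrightarrow> \<gamma> p q \<star> \<gamma> r r = 0"
  using pq gamma_split(1)[OF p q pq] fwd_bwd_absorb[OF p q pq]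
    corner_orthogonal[OF p q _ corner_fwd[OF p q pq]] corner_orthogonal[OF q p _ corner_bwd[OF p q pq]]
    p q
  by (auto simp: inc_mult_add_left inc_mult_add_right)

lemma gamma_chain:
  assumes p: "p \<in> X" and q: "q \<in> X" and r: "r \<in> X" and pq: "p < q" and qr: "q < r"
  shows "\<gamma> p r = \<gamma> p q \<star> \<gamma> q r + \<gamma> q r \<star> \<gamma> p q"
proof -
  have pr: "p < r" using pq qr by simp
  let ?E = "inc_unit q q" and ?A = "inc_unit p q" and ?B = "inc_unit q r" and ?C = "inc_unit p r"
  have alg: "?E \<in> inc_alg X" "?A \<in> inc_alg X" "?B \<in> inc_alg X" "?C \<in> inc_alg X"
    using assms pr by (simp_all add: inc_alg_unit)
  have "?E + ?A + ?B + ?C \<in> inc_idempotents X" "?E - ?A - ?B + ?C \<in> inc_idempotents X"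
    using assms pr by (auto simp: unit_arith)
  moreover have "\<phi> (?E + ?A + ?B + ?C) = \<gamma> q q + \<gamma> p q + \<gamma> q r + \<gamma> p r"
    and "\<phi> (?E - ?A - ?B + ?C) = \<gamma> q q - \<gamma> p q - \<gamma> q r + \<gamma> p r"
    unfolding \<gamma>_def by (simp_all only: phi_add phi_diff inc_alg_add inc_alg_diff alg)
  ultimately have
    "(\<gamma> q q + \<gamma> p q + \<gamma> q r + \<gamma> p r) \<star> (\<gamma> q q + \<gamma> p q + \<gamma> q r + \<gamma> p r)
      = \<gamma> q q + \<gamma> p q + \<gamma> q r + \<gamma> p r"
    "(\<gamma> q q - \<gamma> p q - \<gamma> q r + \<gamma> p r) \<star> (\<gamma> q q - \<gamma> p q - \<gamma> q r + \<gamma> p r)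
      = \<gamma> q q - \<gamma> p q - \<gamma> q r + \<gamma> p r"
    using phi_idempotent_mult by metis+
  from jordan_triangle[OF two_nonzero gamma_idempotent[OF q] gamma_row(1)[OF p q pq]
      gamma_row(1)[OF q r qr] gamma_row(1)[OF p r pr] gamma_row(3)[OF p q pq] gamma_row(2)[OF q r qr]
      this]
  show ?thesis using gamma_mult_diag(5,6)[OF p r pr q] pq qr by simp
qed

lemma fwd_chain:
  assumes p: "p \<in> X" and q: "q \<in> X" and r: "r \<in> X" and pq: "p < q" and qr: "q < r"
  shows "fwd p r = fwd p q \<star> fwd q r"
proof -
  have "fwd p r = \<gamma> p p \<star> \<gamma> p q \<star> (\<gamma> q r \<star> \<gamma> r r) + \<gamma> p p \<star> \<gamma> q r \<star> (\<gamma> p q \<star> \<gamma> r r)"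
    unfolding fwd_def gamma_chain[OF assms]
    by (simp only: inc_mult_add_left inc_mult_add_right inc_mult_assoc)
  also have "\<dots> = fwd p q \<star> fwd q r"
    using gamma_mult_diag[OF p q pq] gamma_mult_diag[OF q r qr] pq qr p by simp
  finally show ?thesis .
qed

lemma bwd_chain:
  assumes p: "p \<in> X" and q: "q \<in> X" and r: "r \<in> X" and pq: "p < q" and qr: "q < r"
  shows "bwd p r = bwd q r \<star> bwd p q"
proof -
  have "bwd p r = \<gamma> r r \<star> \<gamma> p q \<star> (\<gamma> q r \<star> \<gamma> p p) + \<gamma> r r \<star> \<gamma> q r \<star> (\<gamma> p q \<star> \<gamma> p p)"
    unfolding bwd_def gamma_chain[OF assms]
    by (simp only: inc_mult_add_left inc_mult_add_right inc_mult_assoc)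
  also have "\<dots> = bwd q r \<star> bwd p q"
    using gamma_mult_diag[OF p q pq] gamma_mult_diag[OF q r qr] pq qr r by simp
  finally show ?thesis .
qed

lemma bwd_mult_fwd_source:
  assumes p: "p \<in> X" and q: "q \<in> X" and r: "r \<in> X" and pq: "p < q" and pr: "p < r" and qr: "q \<noteq> r"
  shows "bwd p q \<star> fwd p r = 0"
proof -
  note anti = gamma_anticommute_source[OF p q r pq pr qr]
  have "0 = \<gamma> q q \<star> \<gamma> p q \<star> (\<gamma> p r \<star> \<gamma> r r) + \<gamma> q q \<star> \<gamma> p r \<star> (\<gamma> p q \<star> \<gamma> r r)"
    using arg_cong[OF anti, of "\<lambda>x. \<gamma> q q \<star> x \<star> \<gamma> r r"]
    by (simp only: inc_mult_add_left inc_mult_add_right inc_mult_assoc inc_mult_zero_left inc_mult_zero_right)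
  also have "\<dots> = bwd p q \<star> fwd p r"
    using gamma_mult_diag[OF p q pq] gamma_mult_diag[OF p r pr] pq pr qr q by simp
  finally show ?thesis by simp
qed

lemma fwd_mult_bwd_target:
  assumes p: "p \<in> X" and q: "q \<in> X" and r: "r \<in> X" and pr: "p < r" and qr: "q < r" and pq: "p \<noteq> q"
  shows "fwd p r \<star> bwd q r = 0"
proof -
  note anti = gamma_anticommute_target[OF p q r pr qr pq]
  have "0 = \<gamma> p p \<star> \<gamma> p r \<star> (\<gamma> q r \<star> \<gamma> q q) + \<gamma> p p \<star> \<gamma> q r \<star> (\<gamma> p r \<star> \<gamma> q q)"
    using arg_cong[OF anti, of "\<lambda>x. \<gamma> p p \<star> x \<star> \<gamma> q q"]
    by (simp only: inc_mult_add_left inc_mult_add_right inc_mult_assoc inc_mult_zero_left inc_mult_zero_right)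
  also have "\<dots> = fwd p r \<star> bwd q r"
    using gamma_mult_diag[OF p r pr] gamma_mult_diag[OF q r qr] pr qr pq p by simp
  finally show ?thesis by simp
qed

section \<open>A global orientation on connected posets\<close>

definition forward :: "'a \<Rightarrow> 'a \<Rightarrow> bool" where
  "forward p q \<longleftrightarrow> bwd p q = 0"

lemma not_forward_iff:
  "p \<in> X \<Longrightarrow> q \<in> X \<Longrightarrow> p < q \<Longrightarrow> \<not> forward p q \<longleftrightarrow> fwd p q = 0"
  using fwd_eq_zero_iff by (simp add: forward_def)

lemma forward_chain:
  assumes p: "p \<in> X" and q: "q \<in> X" and r: "r \<in> X" and pq: "p < q" and qr: "q < r"
  shows "forward p q \<longleftrightarrow> forward q r" and "forward p q \<longleftrightarrow> forward p r"
proof -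
  have pr: "p < r" using pq qr by simp
  note fwd = fwd_chain[OF assms] and bwd = bwd_chain[OF assms]
    and n1 = not_forward_iff[OF p q pq] and n2 = not_forward_iff[OF q r qr]
    and n3 = not_forward_iff[OF p r pr]
  show "forward p q \<longleftrightarrow> forward q r"
    using fwd bwd n1 n2 n3 unfolding forward_def by force
  show "forward p q \<longleftrightarrow> forward p r"
    using fwd bwd n1 n3 unfolding forward_def by force
qed

lemma forward_source:
  assumes p: "p \<in> X" and q: "q \<in> X" and r: "r \<in> X" and pq: "p < q" and pr: "p < r"
  shows "forward p q \<longleftrightarrow> forward p r"
proof (cases "q = r")
  case False
  have "\<not> (bwd p q \<noteq> 0 \<and> fwd p r \<noteq> 0)" "\<not> (bwd p r \<noteq> 0 \<and> fwd p q \<noteq> 0)"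
    using corner_mult_nonzero[OF q p r corner_bwd[OF p q pq] corner_fwd[OF p r pr]]
      corner_mult_nonzero[OF r p q corner_bwd[OF p r pr] corner_fwd[OF p q pq]]
      bwd_mult_fwd_source[OF p q r pq pr False] bwd_mult_fwd_source[OF p r q pr pq] False
    by blast+
  then show ?thesis using not_forward_iff[OF p q pq] not_forward_iff[OF p r pr]
    unfolding forward_def by blast
qed simp

lemma forward_target:
  assumes p: "p \<in> X" and q: "q \<in> X" and r: "r \<in> X" and pr: "p < r" and qr: "q < r"
  shows "forward p r \<longleftrightarrow> forward q r"
proof (cases "p = q")
  case False
  have "\<not> (fwd p r \<noteq> 0 \<and> bwd q r \<noteq> 0)" "\<not> (fwd q r \<noteq> 0 \<and> bwd p r \<noteq> 0)"
    using corner_mult_nonzero[OF p r q corner_fwd[OF p r pr] corner_bwd[OF q r qr]]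
      corner_mult_nonzero[OF q r p corner_fwd[OF q r qr] corner_bwd[OF p r pr]]
      fwd_mult_bwd_target[OF p q r pr qr False] fwd_mult_bwd_target[OF q p r qr pr] False
    by blast+
  then show ?thesis using not_forward_iff[OF p r pr] not_forward_iff[OF q r qr]
    unfolding forward_def by blast
qed simp

definition forward_at :: "'a \<Rightarrow> bool" where
  "forward_at z \<longleftrightarrow> (\<forall>w\<in>X. (z < w \<longrightarrow> forward z w) \<and> (w < z \<longrightarrow> forward w z))"

lemma forward_at_endpoints:
  assumes p: "p \<in> X" and q: "q \<in> X" and pq: "p < q" and f: "forward p q"
  shows "forward_at p" and "forward_at q"
proof -
  show "forward_at p" unfolding forward_at_def
  proof (intro ballI conjI impI)
    fix w assume w: "w \<in> X"
    show "forward p w" if "p < w" using forward_source[OF p q w pq that] f by simp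
    show "forward w p" if "w < p" using forward_chain(1)[OF w p q that pq] f by simp
  qed
  show "forward_at q" unfolding forward_at_def
  proof (intro ballI conjI impI)
    fix w assume w: "w \<in> X"
    show "forward q w" if "q < w" using forward_chain(1)[OF p q w pq that] f by simp
    show "forward w q" if "w < q" using forward_target[OF p w q pq that] f by simp
  qed
qed

lemma forward_at_step:
  assumes y: "y \<in> X" and z: "z \<in> X" and yz: "y \<le> z \<or> z \<le> y" and f: "forward_at y"
  shows "forward_at z"
proof (cases "y = z")
  case False
  with yz have "y < z \<or> z < y" by auto
  then show ?thesis
    using f y z forward_at_endpoints unfolding forward_at_def by blast
qed (use f in simp)

lemma forward_at_connected:
  assumes conn: "connected_poset X" and a: "a \<in> X" and c: "c \<in> X" and f: "forward_at a"
  shows "forward_at c"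
proof -
  have "(\<lambda>a b. a \<in> X \<and> b \<in> X \<and> (a \<le> b \<or> b \<le> a))\<^sup>*\<^sup>* a c"
    using conn a c unfolding connected_poset_def by blast
  then show ?thesis
    by (induction rule: rtranclp_induct) (use f forward_at_step in blast)+
qed

lemma fwd_or_bwd_vanishes:
  assumes "connected_poset X"
  shows "(\<forall>p\<in>X. \<forall>q\<in>X. p < q \<longrightarrow> bwd p q = 0) \<or> (\<forall>p\<in>X. \<forall>q\<in>X. p < q \<longrightarrow> fwd p q = 0)"
proof (cases "\<exists>a\<in>X. \<exists>b\<in>X. a < b \<and> forward a b")
  case True
  then obtain a b where ab: "a \<in> X" "b \<in> X" "a < b" "forward a b" by blast
  have "forward p q" if "p \<in> X" "q \<in> X" "p < q" for p q
    using forward_at_connected[OF assms ab(1) that(1) forward_at_endpoints(1)[OF ab]] that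
    unfolding forward_at_def by blast
  then show ?thesis unfolding forward_def by blast
next
  case False
  then show ?thesis using not_forward_iff by blast
qed

end

section \<open>Multiplicativity\<close>

context idempotent_preserving
begin

lemma phi_mult_of_basis:
  assumes m: "m = (\<star>) \<or> m = (\<lambda>f g. g \<star> f)"
    and basis: "\<And>p q r s. (p, q) \<in> inc_pairs X \<Longrightarrow> (r, s) \<in> inc_pairs X \<Longrightarrow>
      m (\<gamma> p q) (\<gamma> r s) = (if q = r then \<gamma> p s else 0)"
    and f: "f \<in> inc_alg X" and g: "g \<in> inc_alg X"
  shows "\<phi> (f \<star> g) = m (\<phi> f) (\<phi> g)"
proof -
  let ?P = "inc_pairs X" and ?E = "case_prod inc_unit" and ?G = "case_prod \<gamma>"
  have alg: "inc_scale c (?E i \<star> ?E j) \<in> inc_alg X" if "i \<in> ?P" "j \<in> ?P" for c i j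
    using that by (auto simp: inc_pairs_def intro!: inc_alg_scale inc_alg_mult inc_alg_unit)
  have "f \<star> g = (\<Sum>i\<in>?P. inc_scale (case_prod f i) (?E i)) \<star> (\<Sum>j\<in>?P. inc_scale (case_prod g j) (?E j))"
    by (simp only: inc_alg_decomp[OF f, symmetric] inc_alg_decomp[OF g, symmetric])
  also have "\<dots> = (\<Sum>i\<in>?P. \<Sum>j\<in>?P. inc_scale (case_prod f i * case_prod g j) (?E i \<star> ?E j))"
    by (rule bilinear_expand) simp
  finally have "\<phi> (f \<star> g)
      = \<phi> (\<Sum>i\<in>?P. \<Sum>j\<in>?P. inc_scale (case_prod f i * case_prod g j) (?E i \<star> ?E j))"
    by (rule arg_cong)
  also have "\<dots> = (\<Sum>i\<in>?P. \<phi> (\<Sum>j\<in>?P. inc_scale (case_prod f i * case_prod g j) (?E i \<star> ?E j)))"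
    by (rule phi_sum) (use alg in \<open>blast intro: inc_alg_sum\<close>)
  also have "\<dots> = (\<Sum>i\<in>?P. \<Sum>j\<in>?P. \<phi> (inc_scale (case_prod f i * case_prod g j) (?E i \<star> ?E j)))"
    by (intro sum.cong refl phi_sum) (use alg in blast)
  also have "\<dots> = (\<Sum>i\<in>?P. \<Sum>j\<in>?P. inc_scale (case_prod f i * case_prod g j) (\<phi> (?E i \<star> ?E j)))"
    by (intro sum.cong refl phi_scale) (auto simp: inc_pairs_def intro!: inc_alg_mult inc_alg_unit)
  also have "\<dots> = (\<Sum>i\<in>?P. \<Sum>j\<in>?P. inc_scale (case_prod f i * case_prod g j) (m (?G i) (?G j)))"
    by (intro sum.cong refl arg_cong[where f = "inc_scale _"])
      (auto simp: basis inc_pairs_def unit_mult_unit \<gamma>_def[symmetric] phi_zero)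
  also have "\<dots> = m (\<phi> f) (\<phi> g)"
    by (simp only: phi_decomp[OF f] phi_decomp[OF g] bilinear_expand[OF m])
  finally show ?thesis .
qed

lemma gamma_basis_mult:
  assumes m: "m = (\<star>) \<or> m = (\<lambda>f g. g \<star> f)"
    and left: "\<And>p q. p \<in> X \<Longrightarrow> q \<in> X \<Longrightarrow> p < q \<Longrightarrow> m (\<gamma> p p) (\<gamma> p q) = \<gamma> p q"
    and right: "\<And>p q. p \<in> X \<Longrightarrow> q \<in> X \<Longrightarrow> p < q \<Longrightarrow> m (\<gamma> p q) (\<gamma> q q) = \<gamma> p q"
    and chain: "\<And>p q r. p \<in> X \<Longrightarrow> q \<in> X \<Longrightarrow> r \<in> X \<Longrightarrow> p < q \<Longrightarrow> q < r \<Longrightarrow>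
      m (\<gamma> p q) (\<gamma> q r) = \<gamma> p r"
    and pq: "(p, q) \<in> inc_pairs X" and rs: "(r, s) \<in> inc_pairs X"
  shows "m (\<gamma> p q) (\<gamma> r s) = (if q = r then \<gamma> p s else 0)"
proof -
  have assoc: "m (m a b) c = m a (m b c)" for a b c
    using m by (auto simp: inc_mult_assoc)
  have zero: "m 0 a = 0" "m a 0 = 0" for a
    using m by auto
  have diag: "m (\<gamma> x x) (\<gamma> y y) = (if x = y then \<gamma> x x else 0)" if "x \<in> X" "y \<in> X" for x y
    using m that by (auto simp: gamma_idempotent gamma_orthogonal)
  have left': "m (\<gamma> x x) (\<gamma> x y) = \<gamma> x y" and right': "m (\<gamma> x y) (\<gamma> y y) = \<gamma> x y"
    if "x \<in> X" "y \<in> X" "x \<le> y" for x y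
    using that left right diag by (cases "x = y"; simp)+
  show ?thesis
  proof (cases "q = r")
    case False
    have "m (\<gamma> p q) (\<gamma> r s) = m (m (\<gamma> p q) (\<gamma> q q)) (m (\<gamma> r r) (\<gamma> r s))"
      using pq rs left' right' by (simp add: inc_pairs_def)
    also have "\<dots> = m (\<gamma> p q) (m (m (\<gamma> q q) (\<gamma> r r)) (\<gamma> r s))"
      by (simp only: assoc)
    finally show ?thesis using False pq rs diag zero by (simp add: inc_pairs_def)
  next
    case True
    then consider "p = q" | "q = s" | "p < q" "q < s"
      using pq rs by (auto simp: inc_pairs_def order.order_iff_strict)
    then show ?thesis
      using True pq rs left' right' chain by cases (auto simp: inc_pairs_def)
  qed
qed

end

context bijective_idempotent_preserving
begin

lemma phi_mult_if_bwd_vanishes: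
  assumes bwd: "\<forall>p\<in>X. \<forall>q\<in>X. p < q \<longrightarrow> bwd p q = 0"
    and f: "f \<in> inc_alg X" and g: "g \<in> inc_alg X"
  shows "\<phi> (f \<star> g) = \<phi> f \<star> \<phi> g"
proof -
  have \<gamma>: "\<gamma> p q = fwd p q" if "p \<in> X" "q \<in> X" "p < q" for p q
    using gamma_split(1)[OF that] bwd that by simp
  show ?thesis
  proof (intro phi_mult_of_basis[OF _ _ f g] gamma_basis_mult)
    fix p q r assume "p \<in> X" "q \<in> X" "r \<in> X" "p < q" "q < r"
    then show "\<gamma> p q \<star> \<gamma> q r = \<gamma> p r" using fwd_chain \<gamma> by (metis order.strict_trans)
  qed (simp_all add: \<gamma> fwd_bwd_absorb)
qed

lemma phi_mult_if_fwd_vanishes: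
  assumes fwd: "\<forall>p\<in>X. \<forall>q\<in>X. p < q \<longrightarrow> fwd p q = 0"
    and f: "f \<in> inc_alg X" and g: "g \<in> inc_alg X"
  shows "\<phi> (f \<star> g) = \<phi> g \<star> \<phi> f"
proof -
  have \<gamma>: "\<gamma> p q = bwd p q" if "p \<in> X" "q \<in> X" "p < q" for p q
    using gamma_split(1)[OF that] fwd that by simp
  have "\<phi> (f \<star> g) = (\<lambda>f g. g \<star> f) (\<phi> f) (\<phi> g)"
  proof (intro phi_mult_of_basis[OF _ _ f g] gamma_basis_mult)
    fix p q r assume "p \<in> X" "q \<in> X" "r \<in> X" "p < q" "q < r"
    then show "\<gamma> q r \<star> \<gamma> p q = \<gamma> p r" using bwd_chain \<gamma> by (metis order.strict_trans)
  qed (simp_all add: \<gamma> fwd_bwd_absorb)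
  then show ?thesis by simp
qed

end

theorem corollary4p5:
  fixes X :: "'a::order set" and \<phi> :: "('a \<Rightarrow> 'a \<Rightarrow> 'b::field) \<Rightarrow> ('a \<Rightarrow> 'a \<Rightarrow> 'b)"
  assumes "finite X" and "connected_poset X"
    and "(2::'b) \<noteq> 0"
    and "bij_betw \<phi> (inc_alg X) (inc_alg X)"
    and "inc_linear X \<phi>"
    and "\<phi> ` inc_idempotents X \<subseteq> inc_idempotents X"
  shows "inc_automorphism X \<phi> \<or> inc_anti_automorphism X \<phi>"
proof -
  interpret bijective_idempotent_preserving X \<phi>
    using assms by unfold_locales (auto dest: bij_betw_apply)
  from fwd_or_bwd_vanishes[OF assms(2)] show ?thesis
    unfolding inc_automorphism_def inc_anti_automorphism_def
    using assms(4,5) phi_mult_if_bwd_vanishes phi_mult_if_fwd_vanishes by blast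
qed

end
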